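(* Assume: (i) there is $L_f>0$ with $\|f(w,t)-f(y,t)\|_2\le L_f\|w-y\|_2$ for all $w,y\in\mathbb{R}^{N_s}$, $t\in[0,T]$; (ii) $\Delta t<\sigma_{\min}(A_{LM})/(L_f\sigma_{\max}(B_{LM}))$; (iii) there is $P>0$ with $\|\bar A\,\bar r(w)\|_2\ge P\|\bar r(w)\|_2$ for all $w\in\mathcal{S}$. Let $x\in\mathbb{R}^{N_sN_t}$ satisfy $\bar r(x)=0$, and set $K_r:=\sigma_{\min}(A_{LM})-\Delta t L_f\sigma_{\max}(B_{LM})$. Then for every $w\in\mathcal{S}$, $$\max_{1\le n\le N_t}\|x^n-w^n\|_2\le\|x-w\|_2\le\frac{1}{PK_r}\|\bar A\,\bar r(w)\|_2.$$ In particular, for $\tilde x\in\arg\min_{w\in\mathcal{S}}\|\bar A\,\bar r(w)\|_2$, $$\max_{1\le n\le N_t}\|x^n-\tilde x^n\|_2\le\|x-\tilde x\|_2\le\frac{1}{PK_r}\min_{w\in\mathcal{S}}\|\bar A\,\bar r(w)\|_2.$$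
   Context: Let $f:\mathbb{R}^{N_s}\times[0,T]\to\mathbb{R}^{N_s}$ be the velocity of the ODE $\dot x=f(x,t)$, $x(0)=x^0\in\mathbb{R}^{N_s}$. Use a uniform time grid $t^n=n\Delta t$, $n=0,\dots,N_t$, $\Delta t=T/N_t$. A linear multistep scheme is given by integers $k(n)\le n$ and coefficients $\alpha_j^n,\beta_j^n\in\mathbb{R}$, $j=0,\dots,k(n)$, $n=1,\dots,N_t$, with $\alpha_0^n\neq0$. For $w=(w^1,\dots,w^{N_t})\in\mathbb{R}^{N_sN_t}$ (blocks $w^n\in\mathbb{R}^{N_s}$) set $w^0:=x^0$ and define the residual at step $n$ by $r^n(w)=\sum_{j=0}^{k(n)}\alpha_j^n w^{n-j}-\Delta t\sum_{j=0}^{k(n)}\beta_j^n f(w^{n-j},t^{n-j})$, and the space–time residual $\bar r(w)=(r^1(w),\dots,r^{N_t}(w))\in\mathbb{R}^{N_sN_t}$. Let $A_{LM},B_{LM}\in\mathbb{R}^{N_sN_t\times N_sN_t}$ be the block lower-triangular matrices (blocks of size $N_s\times N_s$) whose $(n,n-j)$ block is $\alpha_j^n I_{N_s}$, resp. $\beta_j^n I_{N_s}$, for $0\le j\le k(n)$ with $n-j\ge1$, and zero otherwise. $\sigma_{\max}(M)$, $\sigma_{\min}(M)$ denote the largest and smallest singular values of $M$; $\|\cdot\|_2$ is the Euclidean norm on $\mathbb{R}^{N_sN_t}$. The space–time trial subspace is the affine subspace $\mathcal{S}=\{(x^0,\dots,x^0)+\sum_{i=1}^{n_{st}}c_i\pi_i: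 c\in\mathbb{R}^{n_{st}}\}\subseteq\mathbb{R}^{N_sN_t}$ for given vectors $\pi_1,\dots,\pi_{n_{st}}\in\mathbb{R}^{N_sN_t}$; $\bar A\in\mathbb{R}^{\bar z\times N_sN_t}$ is a weighting matrix. *)

theory Defs
  imports "HOL-Analysis.Analysis"
begin

text \<open>Space vectors live in \<open>real^'s\<close> (so N_s = CARD('s)).  A space-time vector
  w = (w^1,...,w^{N_t}) is represented by a function \<open>nat \<Rightarrow> real^'s\<close>, of which
  only the blocks with index in {1..Nt} are meaningful.  An (N_s N_t)x(N_s N_t) matrix
  is represented by its N_s x N_s blocks \<open>M n m\<close>, n,m in {1..Nt}.\<close>

definition st_norm :: "nat \<Rightarrow> (nat \<Rightarrow> real^'s) \<Rightarrow> real" where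
  "st_norm Nt w = sqrt (\<Sum>n\<in>{1..Nt}. (norm (w n))\<^sup>2)"

definition st_vecs :: "nat \<Rightarrow> (nat \<Rightarrow> real^'s) set" where
  "st_vecs Nt = {w. \<forall>n. n \<notin> {1..Nt} \<longrightarrow> w n = 0}"

definition blk_apply :: "nat \<Rightarrow> (nat \<Rightarrow> nat \<Rightarrow> real^'s^'s) \<Rightarrow> (nat \<Rightarrow> real^'s) \<Rightarrow> (nat \<Rightarrow> real^'s)" where
  "blk_apply Nt M w = (\<lambda>n. if n \<in> {1..Nt} then (\<Sum>m\<in>{1..Nt}. M n m *v w m) else 0)"

definition sigma_max :: "nat \<Rightarrow> (nat \<Rightarrow> nat \<Rightarrow> real^'s^'s) \<Rightarrow> real" where
  "sigma_max Nt M = Sup {st_norm Nt (blk_apply Nt M v) | v. v \<in> st_vecs Nt \<and> st_norm Nt v = 1}"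

definition sigma_min :: "nat \<Rightarrow> (nat \<Rightarrow> nat \<Rightarrow> real^'s^'s) \<Rightarrow> real" where
  "sigma_min Nt M = Inf {st_norm Nt (blk_apply Nt M v) | v. v \<in> st_vecs Nt \<and> st_norm Nt v = 1}"

definition LM_matrix :: "(nat \<Rightarrow> nat) \<Rightarrow> (nat \<Rightarrow> nat \<Rightarrow> real) \<Rightarrow> nat \<Rightarrow> nat \<Rightarrow> real^'s^'s" where
  "LM_matrix k c n m = (if 1 \<le> m \<and> m \<le> n \<and> n - m \<le> k n then c n (n - m) *\<^sub>R mat 1 else 0)"

definition ext0 :: "'a \<Rightarrow> (nat \<Rightarrow> 'a) \<Rightarrow> nat \<Rightarrow> 'a" where
  "ext0 x0 w n = (if n = 0 then x0 else w n)"

definition LM_residual ::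
  "(real^'s \<Rightarrow> real \<Rightarrow> real^'s) \<Rightarrow> real \<Rightarrow> (nat \<Rightarrow> nat) \<Rightarrow> (nat \<Rightarrow> nat \<Rightarrow> real) \<Rightarrow>
   (nat \<Rightarrow> nat \<Rightarrow> real) \<Rightarrow> real^'s \<Rightarrow> (nat \<Rightarrow> real^'s) \<Rightarrow> nat \<Rightarrow> real^'s" where
  "LM_residual f dt k \<alpha> \<beta> x0 w n =
     (\<Sum>j\<in>{0..k n}. \<alpha> n j *\<^sub>R ext0 x0 w (n - j))
     - dt *\<^sub>R (\<Sum>j\<in>{0..k n}. \<beta> n j *\<^sub>R f (ext0 x0 w (n - j)) (real (n - j) * dt))"

definition st_residual ::
  "nat \<Rightarrow> (real^'s \<Rightarrow> real \<Rightarrow> real^'s) \<Rightarrow> real \<Rightarrow> (nat \<Rightarrow> nat) \<Rightarrow> (nat \<Rightarrow> nat \<Rightarrow> real) \<Rightarrow>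
   (nat \<Rightarrow> nat \<Rightarrow> real) \<Rightarrow> real^'s \<Rightarrow> (nat \<Rightarrow> real^'s) \<Rightarrow> nat \<Rightarrow> real^'s" where
  "st_residual Nt f dt k \<alpha> \<beta> x0 w =
     (\<lambda>n. if n \<in> {1..Nt} then LM_residual f dt k \<alpha> \<beta> x0 w n else 0)"

text \<open>Weighting matrix \<open>Abar\<close> (zbar x N_s N_t), given by its column blocks \<open>Abar n\<close>.\<close>
definition weight_apply :: "nat \<Rightarrow> (nat \<Rightarrow> real^'s^'z) \<Rightarrow> (nat \<Rightarrow> real^'s) \<Rightarrow> real^'z" where
  "weight_apply Nt Ab w = (\<Sum>n\<in>{1..Nt}. Ab n *v w n)"

definition trial_space :: "nat \<Rightarrow> real^'s \<Rightarrow> nat \<Rightarrow> (nat \<Rightarrow> nat \<Rightarrow> real^'s) \<Rightarrow> (nat \<Rightarrow> real^'s) set" where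
  "trial_space Nt x0 nst \<pi> = {w. w \<in> st_vecs Nt \<and>
     (\<exists>c::nat \<Rightarrow> real. \<forall>n\<in>{1..Nt}. w n = x0 + (\<Sum>i\<in>{1..nst}. c i *\<^sub>R \<pi> i n))}"

end

theory Submission
  imports Defs
begin

text \<open>Since x solves the scheme, the residual of any w is a linear image of the error e = x - w:
  r(w) = -(A_LM e - dt B_LM d) with d^n = f(x^n, t^n) - f(w^n, t^n), and |d| \<le> L_f |e| by the
  Lipschitz bound.  The variational characterisation of singular values then gives
  |r(w)| \<ge> (sigma_min(A_LM) - dt L_f sigma_max(B_LM)) |e| = K_r |e|, and the weighting hypothesis
  turns this into the bound by |Abar r(w)|.\<close>

lemma st_norm_eq_L2_set: "st_norm Nt w = L2_set (\<lambda>n. norm (w n)) {1..Nt}"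
  by (simp add: st_norm_def L2_set_def)

lemma st_norm_nonneg: "0 \<le> st_norm Nt w"
  by (simp add: st_norm_eq_L2_set)

lemma st_norm_power2: "(st_norm Nt w)\<^sup>2 = (\<Sum>n\<in>{1..Nt}. (norm (w n))\<^sup>2)"
  by (simp add: st_norm_def sum_nonneg)

lemma st_norm_cong:
  "(\<And>n. n \<in> {1..Nt} \<Longrightarrow> norm (a n) = norm (b n)) \<Longrightarrow> st_norm Nt a = st_norm Nt b"
  unfolding st_norm_eq_L2_set by (rule L2_set_cong) auto

lemma st_norm_triangle_ineq: "st_norm Nt (\<lambda>n. a n + b n) \<le> st_norm Nt a + st_norm Nt b"
proof -
  have "st_norm Nt (\<lambda>n. a n + b n) \<le> L2_set (\<lambda>n. norm (a n) + norm (b n)) {1..Nt}"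
    unfolding st_norm_eq_L2_set by (rule L2_set_mono) (auto intro: norm_triangle_ineq)
  also have "\<dots> \<le> st_norm Nt a + st_norm Nt b"
    unfolding st_norm_eq_L2_set by (rule L2_set_triangle_ineq)
  finally show ?thesis .
qed

lemma st_norm_triangle_ineq2: "st_norm Nt a - st_norm Nt b \<le> st_norm Nt (\<lambda>n. a n - b n)"
  using st_norm_triangle_ineq[of Nt "\<lambda>n. a n - b n" b] by simp

lemma st_norm_scaleR: "st_norm Nt (\<lambda>n. c *\<^sub>R a n) = \<bar>c\<bar> * st_norm Nt a"
  unfolding st_norm_eq_L2_set by (simp add: L2_set_right_distrib)

lemma norm_le_st_norm: "n \<in> {1..Nt} \<Longrightarrow> norm (w n) \<le> st_norm Nt w"
  unfolding st_norm_eq_L2_set by (rule member_le_L2_set) auto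

lemma Max_norm_le_st_norm: "Nt \<ge> 1 \<Longrightarrow> (MAX n\<in>{1..Nt}. norm (w n)) \<le> st_norm Nt w"
  by (simp add: norm_le_st_norm)

lemma st_vecs_unit_exists:
  assumes "Nt \<ge> 1"
  shows "\<exists>v::nat \<Rightarrow> real^'s. v \<in> st_vecs Nt \<and> st_norm Nt v = 1"
proof -
  fix i :: 's
  define v :: "nat \<Rightarrow> real^'s" where "v = (\<lambda>n. if n = 1 then axis i 1 else 0)"
  have "(st_norm Nt v)\<^sup>2 = (\<Sum>n\<in>{1..Nt}. if n = 1 then 1 else 0)"
    unfolding st_norm_power2 by (rule sum.cong) (auto simp: v_def)
  then have "st_norm Nt v = 1"
    using assms st_norm_nonneg[of Nt v] by (simp add: power2_eq_1_iff)
  moreover have "v \<in> st_vecs Nt"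
    using assms by (auto simp: st_vecs_def v_def)
  ultimately show ?thesis by blast
qed

lemma blk_apply_scaleR: "blk_apply Nt M (\<lambda>n. c *\<^sub>R v n) = (\<lambda>n. c *\<^sub>R blk_apply Nt M v n)"
  by (auto simp: blk_apply_def fun_eq_iff matrix_vector_mult_scaleR scaleR_sum_right)

lemma blk_apply_bounded: "\<exists>C. \<forall>v. st_norm Nt (blk_apply Nt M v) \<le> C * st_norm Nt v"
proof -
  define C where "C = (\<Sum>n\<in>{1..Nt}. \<Sum>m\<in>{1..Nt}. onorm ((*v) (M n m)))"
  have "st_norm Nt (blk_apply Nt M v) \<le> C * st_norm Nt v" for v
  proof -
    have block_bound: "norm (M n m *v v m) \<le> onorm ((*v) (M n m)) * st_norm Nt v" if "m \<in> {1..Nt}" for n m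
      using onorm[of "(*v) (M n m)" "v m"] norm_le_st_norm[OF that, of v]
      by (meson matrix_vector_mul_bounded_linear mult_left_mono onorm_pos_le order_trans)
    have "norm (blk_apply Nt M v n) \<le> (\<Sum>m\<in>{1..Nt}. onorm ((*v) (M n m)) * st_norm Nt v)"
      if "n \<in> {1..Nt}" for n
      using that unfolding blk_apply_def
      by (simp only: if_True) (intro order_trans[OF norm_sum] sum_mono block_bound)
    then have "(\<Sum>n\<in>{1..Nt}. norm (blk_apply Nt M v n)) \<le> C * st_norm Nt v"
      unfolding C_def sum_distrib_right by (rule sum_mono)
    moreover have "st_norm Nt (blk_apply Nt M v) \<le> (\<Sum>n\<in>{1..Nt}. norm (blk_apply Nt M v n))"
      unfolding st_norm_eq_L2_set by (rule L2_set_le_sum) auto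
    ultimately show ?thesis by linarith
  qed
  then show ?thesis by blast
qed

lemma blk_apply_unit_rescale:
  assumes "v \<in> st_vecs Nt" and "st_norm Nt v > 0"
  obtains u where "u \<in> st_vecs Nt" and "st_norm Nt u = 1"
    and "st_norm Nt (blk_apply Nt M u) = st_norm Nt (blk_apply Nt M v) / st_norm Nt v"
proof
  let ?u = "\<lambda>n. (1 / st_norm Nt v) *\<^sub>R v n"
  show "?u \<in> st_vecs Nt" using assms(1) by (auto simp: st_vecs_def)
  show "st_norm Nt ?u = 1" using assms(2) by (simp add: st_norm_scaleR)
  show "st_norm Nt (blk_apply Nt M ?u) = st_norm Nt (blk_apply Nt M v) / st_norm Nt v"
    using assms(2) by (simp add: blk_apply_scaleR st_norm_scaleR)
qed

lemma sigma_max_upper: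
  assumes "v \<in> st_vecs Nt"
  shows "st_norm Nt (blk_apply Nt M v) \<le> sigma_max Nt M * st_norm Nt v"
proof -
  obtain C where C: "\<And>v. st_norm Nt (blk_apply Nt M v) \<le> C * st_norm Nt v"
    using blk_apply_bounded by blast
  show ?thesis
  proof (cases "st_norm Nt v = 0")
    case True
    then show ?thesis using C[of v] st_norm_nonneg[of Nt "blk_apply Nt M v"] by simp
  next
    case False
    then have pos: "st_norm Nt v > 0" using st_norm_nonneg[of Nt v] by simp
    have bdd: "bdd_above {st_norm Nt (blk_apply Nt M v) | v. v \<in> st_vecs Nt \<and> st_norm Nt v = 1}"
    proof (rule bdd_aboveI[of _ C])
      fix y assume "y \<in> {st_norm Nt (blk_apply Nt M v) | v. v \<in> st_vecs Nt \<and> st_norm Nt v = 1}"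
      then obtain u where "y = st_norm Nt (blk_apply Nt M u)" "st_norm Nt u = 1" by blast
      then show "y \<le> C" using C[of u] by simp
    qed
    obtain u where "u \<in> st_vecs Nt" "st_norm Nt u = 1"
      and u: "st_norm Nt (blk_apply Nt M u) = st_norm Nt (blk_apply Nt M v) / st_norm Nt v"
      using blk_apply_unit_rescale[OF assms pos] by blast
    then have "st_norm Nt (blk_apply Nt M u) \<le> sigma_max Nt M"
      unfolding sigma_max_def by (blast intro: cSup_upper[OF _ bdd])
    then show ?thesis using pos by (simp add: u divide_le_eq mult.commute)
  qed
qed

lemma sigma_min_lower:
  assumes "v \<in> st_vecs Nt"
  shows "sigma_min Nt M * st_norm Nt v \<le> st_norm Nt (blk_apply Nt M v)"
proof (cases "st_norm Nt v = 0")
  case True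
  then show ?thesis using st_norm_nonneg[of Nt "blk_apply Nt M v"] by simp
next
  case False
  then have pos: "st_norm Nt v > 0" using st_norm_nonneg[of Nt v] by simp
  have bdd: "bdd_below {st_norm Nt (blk_apply Nt M v) | v. v \<in> st_vecs Nt \<and> st_norm Nt v = 1}"
    by (rule bdd_belowI[of _ 0]) (auto simp: st_norm_nonneg)
  obtain u where "u \<in> st_vecs Nt" "st_norm Nt u = 1"
    and u: "st_norm Nt (blk_apply Nt M u) = st_norm Nt (blk_apply Nt M v) / st_norm Nt v"
    using blk_apply_unit_rescale[OF assms pos] by blast
  then have "sigma_min Nt M \<le> st_norm Nt (blk_apply Nt M u)"
    unfolding sigma_min_def by (blast intro: cInf_lower[OF _ bdd])
  then show ?thesis using pos by (simp add: u le_divide_eq)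
qed

lemma sigma_max_least:
  assumes "Nt \<ge> 1" and "\<And>v. v \<in> st_vecs Nt \<Longrightarrow> st_norm Nt (blk_apply Nt M v) \<le> s * st_norm Nt v"
  shows "sigma_max Nt M \<le> s"
  unfolding sigma_max_def
proof (rule cSup_least)
  show "{st_norm Nt (blk_apply Nt M v) | v. v \<in> st_vecs Nt \<and> st_norm Nt v = 1} \<noteq> {}"
    using st_vecs_unit_exists[OF assms(1)] by blast
next
  fix y assume "y \<in> {st_norm Nt (blk_apply Nt M v) | v. v \<in> st_vecs Nt \<and> st_norm Nt v = 1}"
  then obtain v where "v \<in> st_vecs Nt" "st_norm Nt v = 1" "y = st_norm Nt (blk_apply Nt M v)" by blast
  then show "y \<le> s" using assms(2)[of v] by simp
qed

lemma sigma_min_greatest: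
  assumes "Nt \<ge> 1" and "\<And>v. v \<in> st_vecs Nt \<Longrightarrow> s * st_norm Nt v \<le> st_norm Nt (blk_apply Nt M v)"
  shows "s \<le> sigma_min Nt M"
  unfolding sigma_min_def
proof (rule cInf_greatest)
  show "{st_norm Nt (blk_apply Nt M v) | v. v \<in> st_vecs Nt \<and> st_norm Nt v = 1} \<noteq> {}"
    using st_vecs_unit_exists[OF assms(1)] by blast
next
  fix y assume "y \<in> {st_norm Nt (blk_apply Nt M v) | v. v \<in> st_vecs Nt \<and> st_norm Nt v = 1}"
  then obtain v where "v \<in> st_vecs Nt" "st_norm Nt v = 1" "y = st_norm Nt (blk_apply Nt M v)" by blast
  then show "s \<le> y" using assms(2)[of v] by simp
qed

lemma sigma_max_nonneg: "Nt \<ge> 1 \<Longrightarrow> 0 \<le> sigma_max Nt (M :: nat \<Rightarrow> nat \<Rightarrow> real^'s^'s)"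
proof -
  assume "Nt \<ge> 1"
  then obtain v :: "nat \<Rightarrow> real^'s" where "v \<in> st_vecs Nt" "st_norm Nt v = 1"
    using st_vecs_unit_exists by blast
  then show ?thesis
    using sigma_max_upper[of v Nt M] st_norm_nonneg[of Nt "blk_apply Nt M v"] by simp
qed

lemma sigma_min_nonneg: "Nt \<ge> 1 \<Longrightarrow> 0 \<le> sigma_min Nt (M :: nat \<Rightarrow> nat \<Rightarrow> real^'s^'s)"
  by (rule sigma_min_greatest) (simp_all add: st_norm_nonneg)

lemma LM_matrix_mult:
  "LM_matrix k c n m *v x = (if 1 \<le> m \<and> m \<le> n \<and> n - m \<le> k n then c n (n - m) else 0) *\<^sub>R x"
  unfolding LM_matrix_def by (simp add: scaleR_matrix_vector_assoc[symmetric])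

lemma blk_apply_LM_matrix:
  assumes n: "n \<in> {1..Nt}" and kn: "k n \<le> n"
  shows "blk_apply Nt (LM_matrix k c) v n = (\<Sum>j\<in>{0..k n}. c n j *\<^sub>R ext0 0 v (n - j))"
proof -
  have "blk_apply Nt (LM_matrix k c) v n =
        (\<Sum>m\<in>{1..Nt}. if m \<le> n \<and> n - m \<le> k n then c n (n - m) *\<^sub>R v m else 0)"
    using n by (auto simp: blk_apply_def LM_matrix_mult intro!: sum.cong)
  also have "\<dots> = (\<Sum>m\<in>{m\<in>{1..Nt}. m \<le> n \<and> n - m \<le> k n}. c n (n - m) *\<^sub>R v m)"
    by (subst sum.inter_filter) (auto intro!: sum.cong)
  also have "\<dots> = (\<Sum>j\<in>{j\<in>{0..k n}. j < n}. c n j *\<^sub>R v (n - j))"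
    by (rule sum.reindex_bij_witness[of _ "\<lambda>j. n - j" "\<lambda>m. n - m"]) (use n kn in auto)
  also have "\<dots> = (\<Sum>j\<in>{0..k n}. c n j *\<^sub>R ext0 0 v (n - j))"
    using kn by (subst sum.inter_filter) (auto simp: ext0_def intro!: sum.cong)
  finally show ?thesis .
qed

lemma blk_apply_LM_matrix_component:
  "blk_apply Nt (LM_matrix k c) (\<lambda>n. (v n $ i) *\<^sub>R e) = (\<lambda>n. (blk_apply Nt (LM_matrix k c) v n $ i) *\<^sub>R e)"
  by (simp add: fun_eq_iff blk_apply_def LM_matrix_mult scaleR_sum_left)

lemma st_norm_power2_components:
  fixes v :: "nat \<Rightarrow> real^'a" and e :: "real^'b"
  assumes "norm e = 1"
  shows "(st_norm Nt v)\<^sup>2 = (\<Sum>i\<in>UNIV. (st_norm Nt (\<lambda>n. (v n $ i) *\<^sub>R e))\<^sup>2)"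
proof -
  have "(norm (v n))\<^sup>2 = (\<Sum>i\<in>UNIV. (v n $ i)\<^sup>2)" for n
    by (simp add: norm_vec_def L2_set_def sum_nonneg)
  then show ?thesis
    using assms unfolding st_norm_power2 by (simp add: power_mult_distrib) (rule sum.swap)
qed

text \<open>The theorem takes the singular values of A_LM and B_LM at a vector dimension that is not
  tied to N_s (their type is unconstrained).  This is harmless: an LM matrix is a Kronecker product
  L \<otimes> I, which acts on each spatial component separately, so its singular values do not
  depend on the dimension.\<close>

lemma LM_matrix_lower_bound_transfer:
  fixes v :: "nat \<Rightarrow> real^'a"
  assumes "0 \<le> s"
    and lower: "\<And>u :: nat \<Rightarrow> real^'b. u \<in> st_vecs Nt \<Longrightarrow>
                  s * st_norm Nt u \<le> st_norm Nt (blk_apply Nt (LM_matrix k c) u)"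
    and v: "v \<in> st_vecs Nt"
  shows "s * st_norm Nt v \<le> st_norm Nt (blk_apply Nt (LM_matrix k c) v)"
proof -
  fix j :: 'b
  let ?e = "axis j 1 :: real^'b"
  let ?u = "\<lambda>i n. (v n $ i) *\<^sub>R ?e"
  have "?u i \<in> st_vecs Nt" for i using v by (simp add: st_vecs_def)
  have "(s * st_norm Nt v)\<^sup>2 = (\<Sum>i\<in>UNIV. (s * st_norm Nt (?u i))\<^sup>2)"
    by (simp add: st_norm_power2_components[of ?e] power_mult_distrib sum_distrib_left)
  also have "\<dots> \<le> (\<Sum>i\<in>UNIV. (st_norm Nt (blk_apply Nt (LM_matrix k c) (?u i)))\<^sup>2)"
    using lower \<open>\<And>i. ?u i \<in> st_vecs Nt\<close> assms(1)
    by (intro sum_mono power_mono) (simp_all add: st_norm_nonneg)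
  also have "\<dots> = (st_norm Nt (blk_apply Nt (LM_matrix k c) v))\<^sup>2"
    by (simp add: blk_apply_LM_matrix_component st_norm_power2_components[of ?e])
  finally show ?thesis
    using st_norm_nonneg by (rule power2_le_imp_le)
qed

lemma LM_matrix_upper_bound_transfer:
  fixes v :: "nat \<Rightarrow> real^'a"
  assumes "0 \<le> s"
    and upper: "\<And>u :: nat \<Rightarrow> real^'b. u \<in> st_vecs Nt \<Longrightarrow>
                  st_norm Nt (blk_apply Nt (LM_matrix k c) u) \<le> s * st_norm Nt u"
    and v: "v \<in> st_vecs Nt"
  shows "st_norm Nt (blk_apply Nt (LM_matrix k c) v) \<le> s * st_norm Nt v"
proof -
  fix j :: 'b
  let ?e = "axis j 1 :: real^'b"
  let ?u = "\<lambda>i n. (v n $ i) *\<^sub>R ?e"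
  have "?u i \<in> st_vecs Nt" for i using v by (simp add: st_vecs_def)
  have "(st_norm Nt (blk_apply Nt (LM_matrix k c) v))\<^sup>2
      = (\<Sum>i\<in>UNIV. (st_norm Nt (blk_apply Nt (LM_matrix k c) (?u i)))\<^sup>2)"
    by (simp add: blk_apply_LM_matrix_component st_norm_power2_components[of ?e])
  also have "\<dots> \<le> (\<Sum>i\<in>UNIV. (s * st_norm Nt (?u i))\<^sup>2)"
    using upper \<open>\<And>i. ?u i \<in> st_vecs Nt\<close>
    by (intro sum_mono power_mono) (simp_all add: st_norm_nonneg)
  also have "\<dots> = (s * st_norm Nt v)\<^sup>2"
    by (simp add: st_norm_power2_components[of ?e] power_mult_distrib sum_distrib_left)
  finally show ?thesis
    using mult_nonneg_nonneg[OF assms(1) st_norm_nonneg] by (rule power2_le_imp_le)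
qed

lemma sigma_min_LM_matrix_le:
  assumes "Nt \<ge> 1"
  shows "sigma_min Nt (LM_matrix k c :: nat \<Rightarrow> nat \<Rightarrow> real^'b^'b)
       \<le> sigma_min Nt (LM_matrix k c :: nat \<Rightarrow> nat \<Rightarrow> real^'a^'a)"
proof (rule sigma_min_greatest[OF assms])
  let ?s = "sigma_min Nt (LM_matrix k c :: nat \<Rightarrow> nat \<Rightarrow> real^'b^'b)"
  have lower: "?s * st_norm Nt u \<le> st_norm Nt (blk_apply Nt (LM_matrix k c) u)"
    if "u \<in> st_vecs Nt" for u :: "nat \<Rightarrow> real^'b"
    using that by (rule sigma_min_lower)
  show "?s * st_norm Nt v \<le> st_norm Nt (blk_apply Nt (LM_matrix k c) v)"
    if "v \<in> st_vecs Nt" for v :: "nat \<Rightarrow> real^'a"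
    using sigma_min_nonneg[OF assms] lower that by (rule LM_matrix_lower_bound_transfer)
qed

lemma sigma_max_LM_matrix_le:
  assumes "Nt \<ge> 1"
  shows "sigma_max Nt (LM_matrix k c :: nat \<Rightarrow> nat \<Rightarrow> real^'a^'a)
       \<le> sigma_max Nt (LM_matrix k c :: nat \<Rightarrow> nat \<Rightarrow> real^'b^'b)"
proof (rule sigma_max_least[OF assms])
  let ?s = "sigma_max Nt (LM_matrix k c :: nat \<Rightarrow> nat \<Rightarrow> real^'b^'b)"
  have upper: "st_norm Nt (blk_apply Nt (LM_matrix k c) u) \<le> ?s * st_norm Nt u"
    if "u \<in> st_vecs Nt" for u :: "nat \<Rightarrow> real^'b"
    using that by (rule sigma_max_upper)
  show "st_norm Nt (blk_apply Nt (LM_matrix k c) v) \<le> ?s * st_norm Nt v"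
    if "v \<in> st_vecs Nt" for v :: "nat \<Rightarrow> real^'a"
    using sigma_max_nonneg[OF assms] upper that by (rule LM_matrix_upper_bound_transfer)
qed

lemma sigma_min_LM_matrix_dim_indep:
  "Nt \<ge> 1 \<Longrightarrow> sigma_min Nt (LM_matrix k c :: nat \<Rightarrow> nat \<Rightarrow> real^'a^'a)
       = sigma_min Nt (LM_matrix k c :: nat \<Rightarrow> nat \<Rightarrow> real^'b^'b)"
  by (intro order.antisym sigma_min_LM_matrix_le)

lemma sigma_max_LM_matrix_dim_indep:
  "Nt \<ge> 1 \<Longrightarrow> sigma_max Nt (LM_matrix k c :: nat \<Rightarrow> nat \<Rightarrow> real^'a^'a)
       = sigma_max Nt (LM_matrix k c :: nat \<Rightarrow> nat \<Rightarrow> real^'b^'b)"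
  by (intro order.antisym sigma_max_LM_matrix_le)

lemma st_residual_diff:
  fixes x w :: "nat \<Rightarrow> real^'s"
  assumes n: "n \<in> {1..Nt}" and kn: "k n \<le> n"
  shows "st_residual Nt f dt k \<alpha> \<beta> x0 x n - st_residual Nt f dt k \<alpha> \<beta> x0 w n
       = blk_apply Nt (LM_matrix k \<alpha>) (x - w) n
         - dt *\<^sub>R blk_apply Nt (LM_matrix k \<beta>)
             (\<lambda>m. if m \<in> {1..Nt} then f (x m) (real m * dt) - f (w m) (real m * dt) else 0) n"
proof -
  let ?d = "\<lambda>m. if m \<in> {1..Nt} then f (x m) (real m * dt) - f (w m) (real m * dt) else 0"
  have state_diff: "ext0 x0 x (n - j) - ext0 x0 w (n - j) = ext0 0 (x - w) (n - j)" for j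
    by (simp add: ext0_def)
  have velocity_diff: "f (ext0 x0 x (n - j)) (real (n - j) * dt) - f (ext0 x0 w (n - j)) (real (n - j) * dt)
      = ext0 0 ?d (n - j)" for j
    using n by (auto simp: ext0_def)
  have "st_residual Nt f dt k \<alpha> \<beta> x0 x n - st_residual Nt f dt k \<alpha> \<beta> x0 w n
      = (\<Sum>j\<in>{0..k n}. \<alpha> n j *\<^sub>R (ext0 x0 x (n - j) - ext0 x0 w (n - j)))
        - dt *\<^sub>R (\<Sum>j\<in>{0..k n}. \<beta> n j *\<^sub>R
            (f (ext0 x0 x (n - j)) (real (n - j) * dt) - f (ext0 x0 w (n - j)) (real (n - j) * dt)))"
    using n by (simp add: st_residual_def LM_residual_def sum_subtractf algebra_simps)
  also have "\<dots> = blk_apply Nt (LM_matrix k \<alpha>) (x - w) n - dt *\<^sub>R blk_apply Nt (LM_matrix k \<beta>) ?d n"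
    by (simp only: state_diff velocity_diff blk_apply_LM_matrix[of n Nt k, OF n kn])
  finally show ?thesis .
qed

lemma st_residual_stability:
  fixes x w :: "nat \<Rightarrow> real^'s"
  assumes Nt: "Nt \<ge> 1" and k_le: "\<forall>n\<in>{1..Nt}. k n \<le> n"
    and "dt \<ge> 0" and "Lf \<ge> 0"
    and lipschitz: "\<And>n y z. n \<in> {1..Nt} \<Longrightarrow>
                      norm (f y (real n * dt) - f z (real n * dt)) \<le> Lf * norm (y - z)"
    and x: "x \<in> st_vecs Nt" and w: "w \<in> st_vecs Nt"
  shows "(sigma_min Nt (LM_matrix k \<alpha> :: nat \<Rightarrow> nat \<Rightarrow> real^'s^'s)
          - dt * Lf * sigma_max Nt (LM_matrix k \<beta> :: nat \<Rightarrow> nat \<Rightarrow> real^'s^'s)) * st_norm Nt (x - w)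
       \<le> st_norm Nt (\<lambda>n. st_residual Nt f dt k \<alpha> \<beta> x0 x n - st_residual Nt f dt k \<alpha> \<beta> x0 w n)"
proof -
  let ?A = "LM_matrix k \<alpha> :: nat \<Rightarrow> nat \<Rightarrow> real^'s^'s"
  let ?B = "LM_matrix k \<beta> :: nat \<Rightarrow> nat \<Rightarrow> real^'s^'s"
  define d where "d = (\<lambda>m. if m \<in> {1..Nt} then f (x m) (real m * dt) - f (w m) (real m * dt) else 0)"
  have e_vec: "x - w \<in> st_vecs Nt" using x w by (simp add: st_vecs_def)
  have d_vec: "d \<in> st_vecs Nt" by (simp add: st_vecs_def d_def)
  have "st_norm Nt d \<le> L2_set (\<lambda>n. Lf * norm ((x - w) n)) {1..Nt}"
    unfolding st_norm_eq_L2_set by (rule L2_set_mono) (simp_all add: d_def lipschitz)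
  then have d_bound: "st_norm Nt d \<le> Lf * st_norm Nt (x - w)"
    using \<open>Lf \<ge> 0\<close> by (simp add: st_norm_eq_L2_set L2_set_right_distrib)
  have "dt * st_norm Nt (blk_apply Nt ?B d) \<le> dt * (sigma_max Nt ?B * st_norm Nt d)"
    using sigma_max_upper[OF d_vec] \<open>dt \<ge> 0\<close> by (rule mult_left_mono)
  also have "\<dots> \<le> dt * (sigma_max Nt ?B * (Lf * st_norm Nt (x - w)))"
    using d_bound sigma_max_nonneg[OF Nt] \<open>dt \<ge> 0\<close> by (intro mult_left_mono) simp_all
  finally have "(sigma_min Nt ?A - dt * Lf * sigma_max Nt ?B) * st_norm Nt (x - w)
      \<le> st_norm Nt (blk_apply Nt ?A (x - w)) - dt * st_norm Nt (blk_apply Nt ?B d)"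
    using sigma_min_lower[OF e_vec, of ?A] by (simp add: algebra_simps)
  also have "\<dots> = st_norm Nt (blk_apply Nt ?A (x - w)) - st_norm Nt (\<lambda>n. dt *\<^sub>R blk_apply Nt ?B d n)"
    using \<open>dt \<ge> 0\<close> by (simp add: st_norm_scaleR)
  also have "\<dots> \<le> st_norm Nt (\<lambda>n. blk_apply Nt ?A (x - w) n - dt *\<^sub>R blk_apply Nt ?B d n)"
    by (rule st_norm_triangle_ineq2)
  also have "\<dots> = st_norm Nt (\<lambda>n. st_residual Nt f dt k \<alpha> \<beta> x0 x n - st_residual Nt f dt k \<alpha> \<beta> x0 w n)"
    using k_le by (intro st_norm_cong) (simp add: st_residual_diff d_def)
  finally show ?thesis .
qed

lemma uniform_grid_point_mem:
  assumes "T > 0" and "n \<in> {1..Nt}"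
  shows "real n * (T / real Nt) \<in> {0..T}"
proof -
  have "real n * (T / real Nt) \<le> real Nt * (T / real Nt)"
    using assms by (intro mult_right_mono) auto
  then show ?thesis using assms by simp
qed

theorem mainTheorem6:
  fixes f :: "real^'s \<Rightarrow> real \<Rightarrow> real^'s"
    and T :: real and Nt :: nat and k :: "nat \<Rightarrow> nat"
    and \<alpha> \<beta> :: "nat \<Rightarrow> nat \<Rightarrow> real" and x0 :: "real^'s"
    and nst :: nat and \<pi> :: "nat \<Rightarrow> nat \<Rightarrow> real^'s"
    and Abar :: "nat \<Rightarrow> real^'s^'z"
    and Lf P :: real and x :: "nat \<Rightarrow> real^'s"
  defines "dt \<equiv> T / real Nt"
  defines "S \<equiv> trial_space Nt x0 nst \<pi>"
  defines "rbar \<equiv> st_residual Nt f dt k \<alpha> \<beta> x0"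
  defines "Kr \<equiv> sigma_min Nt (LM_matrix k \<alpha>) - dt * Lf * sigma_max Nt (LM_matrix k \<beta>)"
  assumes T_pos: "T > 0" and Nt_pos: "Nt \<ge> 1"
    and k_le: "\<forall>n\<in>{1..Nt}. k n \<le> n"
    and alpha0: "\<forall>n\<in>{1..Nt}. \<alpha> n 0 \<noteq> 0"
    and pi_st: "\<forall>i\<in>{1..nst}. \<pi> i \<in> st_vecs Nt"
    and Lf_pos: "Lf > 0"
    and lipschitz: "\<forall>w y t. t \<in> {0..T} \<longrightarrow> norm (f w t - f y t) \<le> Lf * norm (w - y)"
    and dt_small: "dt * Lf * sigma_max Nt (LM_matrix k \<beta>) < sigma_min Nt (LM_matrix k \<alpha>)"
    and P_pos: "P > 0"
    and weight_bound: "\<forall>w\<in>S. norm (weight_apply Nt Abar (rbar w)) \<ge> P * st_norm Nt (rbar w)"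
    and x_st: "x \<in> st_vecs Nt"
    and x_sol: "\<forall>n\<in>{1..Nt}. rbar x n = 0"
  shows "(\<forall>w\<in>S.
            (MAX n\<in>{1..Nt}. norm (x n - w n)) \<le> st_norm Nt (x - w) \<and>
            st_norm Nt (x - w) \<le> 1 / (P * Kr) * norm (weight_apply Nt Abar (rbar w)))
       \<and> (\<forall>xt. xt \<in> S \<and> (\<forall>w\<in>S. norm (weight_apply Nt Abar (rbar xt)) \<le> norm (weight_apply Nt Abar (rbar w)))
            \<longrightarrow> (MAX n\<in>{1..Nt}. norm (x n - xt n)) \<le> st_norm Nt (x - xt) \<and>
                st_norm Nt (x - xt) \<le> 1 / (P * Kr) * (INF w\<in>S. norm (weight_apply Nt Abar (rbar w))))"
proof -
  let ?W = "\<lambda>w. norm (weight_apply Nt Abar (rbar w))"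
  have "dt > 0" using T_pos Nt_pos by (simp add: dt_def)
  have Kr_eq: "Kr = sigma_min Nt (LM_matrix k \<alpha> :: nat \<Rightarrow> nat \<Rightarrow> real^'s^'s)
                   - dt * Lf * sigma_max Nt (LM_matrix k \<beta> :: nat \<Rightarrow> nat \<Rightarrow> real^'s^'s)"
    unfolding Kr_def
    using sigma_min_LM_matrix_dim_indep[OF Nt_pos] sigma_max_LM_matrix_dim_indep[OF Nt_pos] by metis
  have "Kr > 0"
    using dt_small sigma_min_LM_matrix_dim_indep[OF Nt_pos] sigma_max_LM_matrix_dim_indep[OF Nt_pos]
    unfolding Kr_eq by (metis diff_gt_0_iff_gt)
  have error_bound: "st_norm Nt (x - w) \<le> 1 / (P * Kr) * ?W w" if "w \<in> S" for w
  proof -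
    have "w \<in> st_vecs Nt" using that by (simp add: S_def trial_space_def)
    then have "Kr * st_norm Nt (x - w) \<le> st_norm Nt (\<lambda>n. rbar x n - rbar w n)"
      unfolding Kr_eq rbar_def
      using Nt_pos k_le \<open>dt > 0\<close> Lf_pos lipschitz uniform_grid_point_mem[OF T_pos] x_st
      by (intro st_residual_stability) (auto simp: dt_def)
    also have "\<dots> = st_norm Nt (rbar w)"
      using x_sol by (intro st_norm_cong) simp
    finally have "P * (Kr * st_norm Nt (x - w)) \<le> ?W w"
      using weight_bound that P_pos by (meson mult_left_mono less_imp_le order_trans)
    then show ?thesis using P_pos \<open>Kr > 0\<close> by (simp add: field_simps)
  qed
  show ?thesis
  proof (intro conjI ballI allI impI)
    fix xt assume xt: "xt \<in> S \<and> (\<forall>w\<in>S. ?W xt \<le> ?W w)"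
    then have "(INF w\<in>S. ?W w) = ?W xt"
      by (intro cInf_eq_minimum) auto
    then show "st_norm Nt (x - xt) \<le> 1 / (P * Kr) * (INF w\<in>S. ?W w)"
      using error_bound xt by simp
  qed (use error_bound Max_norm_le_st_norm[OF Nt_pos] in \<open>auto simp: fun_diff_def\<close>)
qed

end
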